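(* Consider the algorithm AOD described in the context, with known horizon $T$, under assumptions (A1)–(A3). Let $\mathbf{u}_1,\ldots,\mathbf{u}_{T+1}\in\Omega$ and $P_T=\sum_{t=1}^T\|\mathbf{u}_{t+1}-\mathbf{u}_t\|_2$. Let $s=\lceil\log_2T\rceil$ and suppose $D2^{i-1}<P_T\le D2^i$ for some $i\in\{1,\ldots,s\}$. Then \[ \sum_{t=1}^T f_t(\mathbf{w}_t)-\sum_{t=1}^T f_t(\mathbf{u}_t)\le\Big(\frac{DG}{2}+\frac{3G}{2}\sqrt{2DP_T}+\sqrt{3c(T)\Big(1+\frac{2P_T}{D}\Big)}\Big)\sqrt{T}, \] where $c(T)=1+\ln T+\ln(1+\log_2 T)+\ln\frac{5+3\ln(1+T)}{2}$.
   Context: Online convex optimization: $\Omega\subseteq\mathbb{R}^d$ convex; in round $t=1,\ldots,T$ the learner plays $\mathbf{w}_t\in\Omega$, then a convex $f_t:\Omega\to\mathbb{R}$ is revealed. Assumptions: (A1) $\|\nabla f_t(\mathbf{w})\|_2\le G$ for all $\mathbf{w}\in\Omega$, $t\in[T]$; (A2) $\mathbf{0}\in\Omega$ and $\max_{\mathbf{w},\mathbf{w}'\in\Omega}\|\mathbf{w}-\mathbf{w}'\|_2\le D$; (A3) $0\le f_t\le1$ on $\Omega$. $\Pi_\Omega$ is Euclidean projection. Dense geometric covering intervals: $\mathcal{D}=\bigcup_{k\ge0,\,2^k\le T}\mathcal{D}_k$, $\mathcal{D}_k=\{[(i-1)2^k+1,\,i2^k]: i=1,2,\ldots\}$. Algorithm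 AOD: for each $I\in\mathcal{D}$ an expert $E_I$ runs online gradient descent $\mathbf{w}_{t+1,I}=\Pi_\Omega[\mathbf{w}_{t,I}-\eta_I\nabla f_t(\mathbf{w}_{t,I})]$, $\eta_I=D/(G\sqrt{|I|})$, over rounds $t\in I$; its initial point is arbitrary if $\min I=1$, and otherwise is the next iterate of the expert of the preceding same-length interval $[\min I-|I|,\min I-1]$ after processing $f_{\min I-1}$. Active experts at round $t$: $\mathcal{A}_t=\{E_I:I\in\mathcal{D},t\in I\}$. Meta-algorithm (AdaNormalHedge): $\Phi(R,C)=\exp([R]_+^2/(3C))$, $[x]_+=\max(0,x)$, $\Phi(0,0)=1$, $w(R,C)=\tfrac12(\Phi(R+1,C+1)-\Phi(R-1,C+1))$, $R_{t-1,I}=\sum_{u=\min I}^{t-1}(f_u(\mathbf{w}_u)-f_u(\mathbf{w}_{u,I}))$, $C_{t-1,I}=\sum_{u=\min I}^{t-1}|f_u(\mathbf{w}_u)-f_u(\mathbf{w}_{u,I})|$, $p_{t,I}=w(R_{t-1,I},C_{t-1,I})/\sum_{E_{I'}\in\mathcal{A}_t}w(R_{t-1,I'},C_{t-1,I'})$, played point $\mathbf{w}_t=\sum_{E_I\in\mathcal{A}_t}p_{t,I}\mathbf{w}_{t,I}$. *)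

theory Defs
  imports "HOL-Analysis.Analysis"
begin

definition proj :: "'a::euclidean_space set \<Rightarrow> 'a \<Rightarrow> 'a" where
  "proj \<Omega> x = closest_point \<Omega> x"

text \<open>Dense geometric covering intervals: interval (k,i) is [(i-1)2^k+1, i 2^k], i \<ge> 1, 2^k \<le> T.\<close>
definition iv_start :: "nat \<Rightarrow> nat \<Rightarrow> nat" where
  "iv_start k i = (i - 1) * 2 ^ k + 1"

definition iv_end :: "nat \<Rightarrow> nat \<Rightarrow> nat" where
  "iv_end k i = i * 2 ^ k"

definition DGC :: "nat \<Rightarrow> (nat \<times> nat) set" where
  "DGC T = {(k, i). 2 ^ k \<le> T \<and> i \<ge> 1}"

definition active :: "nat \<Rightarrow> nat \<Rightarrow> (nat \<times> nat) set" where
  "active T t = {(k, i) \<in> DGC T. iv_start k i \<le> t \<and> t \<le> iv_end k i}"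

definition eta :: "real \<Rightarrow> real \<Rightarrow> nat \<Rightarrow> real" where
  "eta D G k = D / (G * sqrt (2 ^ k))"

text \<open>The expert of the first interval of
  level k starts at the (arbitrary) point init k; every later expert of level k starts
  at the next iterate of the expert of the preceding interval of the same length, and all
  experts of level k use the same step size eta D G k.  Hence, unfolding the definition,
  the expert E_(k,i) plays at round t \<in> (k,i) the t-th iterate of the following
  projected gradient descent sequence (rounds are 1-indexed).\<close>
primrec ogd :: "'a::euclidean_space set \<Rightarrow> real \<Rightarrow> real \<Rightarrow> (nat \<Rightarrow> 'a \<Rightarrow> 'a)
    \<Rightarrow> (nat \<Rightarrow> 'a) \<Rightarrow> nat \<Rightarrow> nat \<Rightarrow> 'a" where
  "ogd \<Omega> D G g init k 0 = init k"
| "ogd \<Omega> D G g init k (Suc n) =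
     (if n = 0 then init k
      else proj \<Omega> (ogd \<Omega> D G g init k n - eta D G k *\<^sub>R g n (ogd \<Omega> D G g init k n)))"

definition expert_pt :: "'a::euclidean_space set \<Rightarrow> real \<Rightarrow> real \<Rightarrow> (nat \<Rightarrow> 'a \<Rightarrow> 'a)
    \<Rightarrow> (nat \<Rightarrow> 'a) \<Rightarrow> nat \<times> nat \<Rightarrow> nat \<Rightarrow> 'a" where
  "expert_pt \<Omega> D G g init I t = ogd \<Omega> D G g init (fst I) t"

definition Phi :: "real \<Rightarrow> real \<Rightarrow> real" where
  "Phi R C = (if R = 0 \<and> C = 0 then 1 else exp ((max 0 R)\<^sup>2 / (3 * C)))"

definition wt :: "real \<Rightarrow> real \<Rightarrow> real" where
  "wt R C = (Phi (R + 1) (C + 1) - Phi (R - 1) (C + 1)) / 2"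

definition aod_step :: "'a::euclidean_space set \<Rightarrow> real \<Rightarrow> real \<Rightarrow> nat
    \<Rightarrow> (nat \<Rightarrow> 'a \<Rightarrow> real) \<Rightarrow> (nat \<Rightarrow> 'a \<Rightarrow> 'a) \<Rightarrow> (nat \<Rightarrow> 'a) \<Rightarrow> (nat \<Rightarrow> 'a) \<Rightarrow> nat \<Rightarrow> 'a" where
  "aod_step \<Omega> D G T f g init w t =
    (let x = expert_pt \<Omega> D G g init;
         R = (\<lambda>I. \<Sum>u = iv_start (fst I) (snd I)..<t. f u (w u) - f u (x I u));
         C = (\<lambda>I. \<Sum>u = iv_start (fst I) (snd I)..<t. \<bar>f u (w u) - f u (x I u)\<bar>);
         W = (\<lambda>I. wt (R I) (C I));
         p = (\<lambda>I. W I / (\<Sum>J\<in>active T t. W J))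
     in \<Sum>I\<in>active T t. p I *\<^sub>R x I t)"

primrec aod_hist :: "'a::euclidean_space set \<Rightarrow> real \<Rightarrow> real \<Rightarrow> nat
    \<Rightarrow> (nat \<Rightarrow> 'a \<Rightarrow> real) \<Rightarrow> (nat \<Rightarrow> 'a \<Rightarrow> 'a) \<Rightarrow> (nat \<Rightarrow> 'a) \<Rightarrow> nat \<Rightarrow> 'a list" where
  "aod_hist \<Omega> D G T f g init 0 = []"
| "aod_hist \<Omega> D G T f g init (Suc n) =
     aod_hist \<Omega> D G T f g init n @
       [aod_step \<Omega> D G T f g init (\<lambda>u. aod_hist \<Omega> D G T f g init n ! (u - 1)) (Suc n)]"

definition aod :: "'a::euclidean_space set \<Rightarrow> real \<Rightarrow> real \<Rightarrow> nat
    \<Rightarrow> (nat \<Rightarrow> 'a \<Rightarrow> real) \<Rightarrow> (nat \<Rightarrow> 'a \<Rightarrow> 'a) \<Rightarrow> (nat \<Rightarrow> 'a) \<Rightarrow> nat \<Rightarrow> 'a" where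
  "aod \<Omega> D G T f g init t = aod_hist \<Omega> D G T f g init t ! (t - 1)"

definition cT :: "nat \<Rightarrow> real" where
  "cT T = 1 + ln (real T) + ln (1 + log 2 (real T)) + ln ((5 + 3 * ln (1 + real T)) / 2)"

end

theory Submission
  imports Defs "HOL-Probability.Hoeffding" "HOL-Library.Log_Nat"
begin

(* Split the regret at the level k = ceil(log2 T) - i into the regret of AOD against the
   experts of level k and the dynamic regret of these experts, which all run one online gradient
   descent with step size D/(G sqrt(2^k)).  The hypothesis on P_T puts 2^k within a factor 2 of
   D T / P_T, the interval length for which this step size is optimal; this gives the first two
   terms.  For the meta-regret, the AdaNormalHedge potential sum_I Phi(R_I, C_I) grows in a round
   by at most sum_I (3/2) |r_I| / (C_I + 1), since the weighted instantaneous regret is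
   nonpositive by Jensen's inequality.  Summing these harmonic-type increments bounds the final
   potential by exp(c(T) - 1), so R_I <= sqrt(3 c(T) C_I) for every interval, and Cauchy-Schwarz
   over the 2^i intervals of level k that cover [1, T] gives the last term. *)

section \<open>The AdaNormalHedge potential\<close>

(* The case R = C = 0 of the definition is subsumed, as x / 0 = 0. *)
lemma Phi_conv_exp: "Phi R C = exp ((max 0 R)\<^sup>2 / (3 * C))"
  by (simp add: Phi_def)

lemma exp_le_one_plus_four_thirds:
  fixes x :: real
  assumes "0 \<le> x" "x \<le> 1/3"
  shows "exp x \<le> 1 + 4/3 * x"
proof -
  have "x\<^sup>2 \<le> x / 3"
    using assms by (simp add: power2_eq_square mult_left_mono[of x "1/3" x, simplified])
  then show ?thesis
    using exp_bound[of x] assms by simp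
qed

(* Hoeffding's lemma for a fair coin with values 0 and h. *)
lemma one_plus_exp_half_le:
  fixes h :: real
  assumes "0 \<le> h"
  shows "(1 + exp h) / 2 \<le> exp (h / 2 + h\<^sup>2 / 8)"
proof -
  have "ln ((1 + exp h) / 2) \<le> h / 2 + h\<^sup>2 / 8"
    using Hoeffdings_lemma_aux[of h "1/2"] assms by (simp add: field_simps)
  then show ?thesis
    by (metis add_pos_pos divide_pos_pos exp_gt_zero exp_le_cancel_iff exp_ln zero_less_numeral zero_less_one)
qed

lemma Phi_exponent_gap:
  fixes R C :: real
  assumes C: "0 \<le> C" and RC: "\<bar>R\<bar> \<le> C"
  defines "Z \<equiv> (R\<^sup>2 + 1) / (3 * (C + 1)) + 2 * R\<^sup>2 / (9 * (C + 1)\<^sup>2)"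
    and "E \<equiv> R\<^sup>2 / (3 * C)"
  shows "Z \<le> E + 1 / (3 * (C + 1)) \<and> (E < Z \<longrightarrow> E \<le> 1)"
proof (cases "C = 0")
  case True
  then show ?thesis using RC by (simp add: Z_def E_def)
next
  case False
  then have C0: "0 < C" using C by simp
  have den: "0 < 9 * (C + 1)\<^sup>2 * C" using C0 by simp
  have gap: "Z - E = (3 * (C + 1) * C - R\<^sup>2 * (C + 3)) / (9 * (C + 1)\<^sup>2 * C)"
    unfolding Z_def E_def using C0
    by (simp add: divide_simps power2_eq_square) (simp add: algebra_simps)
  have "Z - E \<le> 3 * (C + 1) * C / (9 * (C + 1)\<^sup>2 * C)"
    unfolding gap using den C0 by (intro divide_right_mono) auto
  also have "\<dots> = 1 / (3 * (C + 1))"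
  proof -
    have "9 * (C + 1)\<^sup>2 * C = (3 * (C + 1) * C) * (3 * (C + 1))"
      by (simp add: power2_eq_square algebra_simps)
    then show ?thesis using C0 by simp
  qed
  finally have "Z \<le> E + 1 / (3 * (C + 1))" by simp
  moreover have "E \<le> 1" if "E < Z"
  proof -
    have "R\<^sup>2 * (C + 3) < 3 * (C + 1) * C"
    proof -
      have "0 < Z - E" using that by simp
      then show ?thesis using den unfolding gap by (simp add: zero_less_divide_iff)
    qed
    then have "E < (C + 1) / (C + 3)"
      unfolding E_def using C0 by (simp add: field_simps)
    also have "\<dots> \<le> 1" using C0 by simp
    finally show ?thesis by simp
  qed
  ultimately show ?thesis by blast
qed

lemma Phi_shift_average_le_exp:
  fixes R C :: real
  assumes R: "0 \<le> R" and C: "0 \<le> C"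
  shows "(Phi (R + 1) (C + 1) + Phi (R - 1) (C + 1)) / 2
    \<le> exp ((R\<^sup>2 + 1) / (3 * (C + 1)) + 2 * R\<^sup>2 / (9 * (C + 1)\<^sup>2))"
proof -
  \<comment> \<open>Both terms carry the factor exp ((R - 1)^2 / (3 (C + 1))).\<close>
  define h where "h = 4 * R / (3 * (C + 1))"
  have h: "0 \<le> h" using R C by (simp add: h_def)
  have "(max 0 (R + 1))\<^sup>2 = (R - 1)\<^sup>2 + 4 * R"
    using R by (simp add: power2_eq_square algebra_simps)
  then have "Phi (R + 1) (C + 1) = exp ((R - 1)\<^sup>2 / (3 * (C + 1))) * exp h"
    by (simp add: Phi_conv_exp h_def add_divide_distrib exp_add)
  moreover have "Phi (R - 1) (C + 1) \<le> exp ((R - 1)\<^sup>2 / (3 * (C + 1)))"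
    using C by (auto simp: Phi_conv_exp max_def intro!: divide_right_mono)
  ultimately have "(Phi (R + 1) (C + 1) + Phi (R - 1) (C + 1)) / 2
      \<le> exp ((R - 1)\<^sup>2 / (3 * (C + 1))) * ((1 + exp h) / 2)"
    by (simp add: field_simps)
  also have "\<dots> \<le> exp ((R - 1)\<^sup>2 / (3 * (C + 1))) * exp (h / 2 + h\<^sup>2 / 8)"
    using h by (intro mult_left_mono one_plus_exp_half_le) auto
  also have "\<dots> = exp ((R\<^sup>2 + 1) / (3 * (C + 1)) + 2 * R\<^sup>2 / (9 * (C + 1)\<^sup>2))"
  proof -
    have "(R - 1)\<^sup>2 / (3 * a) + ((4 * R / (3 * a)) / 2 + (4 * R / (3 * a))\<^sup>2 / 8)
        = (R\<^sup>2 + 1) / (3 * a) + 2 * R\<^sup>2 / (9 * a\<^sup>2)" if "0 < a" for a :: real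
      using that by (simp add: field_simps power2_eq_square)
    from this[of "C + 1"] show ?thesis
      using C by (simp add: h_def flip: exp_add)
  qed
  finally show ?thesis .
qed

lemma exp_shift_exponent_le_Phi:
  fixes R C :: real
  assumes R: "0 \<le> R" and C: "0 \<le> C" and RC: "\<bar>R\<bar> \<le> C"
  shows "exp ((R\<^sup>2 + 1) / (3 * (C + 1)) + 2 * R\<^sup>2 / (9 * (C + 1)\<^sup>2)) \<le> Phi R C + (3/2) / (C + 1)"
proof -
  define Z where "Z = (R\<^sup>2 + 1) / (3 * (C + 1)) + 2 * R\<^sup>2 / (9 * (C + 1)\<^sup>2)"
  define E where "E = R\<^sup>2 / (3 * C)"
  have Phi: "Phi R C = exp E" using R by (simp add: Phi_conv_exp E_def)
  show ?thesis
  proof (cases "Z \<le> E")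
    case True
    then have "exp Z \<le> Phi R C" by (simp add: Phi)
    moreover have "0 \<le> (3/2) / (C + 1)" using C by simp
    ultimately show ?thesis unfolding Z_def by linarith
  next
    case False
    define x where "x = 1 / (3 * (C + 1))"
    have x: "0 \<le> x" "x \<le> 1/3" using C by (auto simp: x_def field_simps)
    have gap: "Z \<le> E + x" "E \<le> 1"
      using Phi_exponent_gap[OF C RC] False unfolding Z_def E_def x_def by auto
    have "exp E \<le> exp 1" using gap by simp
    also have "\<dots> \<le> 3" by (rule exp_le)
    finally have E3: "exp E \<le> 3" .
    have "exp Z \<le> exp E * exp x"
      using gap by (simp flip: exp_add)
    also have "\<dots> \<le> exp E * (1 + 4/3 * x)"
      using x by (intro mult_left_mono exp_le_one_plus_four_thirds) auto
    also have "\<dots> \<le> exp E + 3 * (4/3 * x)"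
      using mult_right_mono[OF E3, of "4/3 * x"] x by (simp add: distrib_left)
    also have "3 * (4/3 * x) \<le> (3/2) / (C + 1)"
      using C by (simp add: x_def field_simps)
    finally show ?thesis by (simp add: Phi Z_def)
  qed
qed

lemma Phi_shift_average_le:
  fixes R C :: real
  assumes C: "0 \<le> C" and RC: "\<bar>R\<bar> \<le> C"
  shows "(Phi (R + 1) (C + 1) + Phi (R - 1) (C + 1)) / 2 \<le> Phi R C + (3/2) / (C + 1)"
proof (cases "R < 0")
  case True
  have "(max 0 (R + 1))\<^sup>2 \<le> 1"
    using True RC by (auto simp: max_def power_le_one abs_le_iff)
  then have "(max 0 (R + 1))\<^sup>2 / (3 * (C + 1)) \<le> 1 / (3 * (C + 1))"
    using C by (intro divide_right_mono) auto
  then have "Phi (R + 1) (C + 1) \<le> exp (1 / (3 * (C + 1)))"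
    by (simp add: Phi_conv_exp)
  also have "\<dots> \<le> 1 + 4/3 * (1 / (3 * (C + 1)))"
    using C by (intro exp_le_one_plus_four_thirds) (auto simp: field_simps)
  also have "\<dots> \<le> 1 + 3 / (C + 1)"
    using C by (simp add: field_simps)
  finally have "Phi (R + 1) (C + 1) \<le> 1 + 3 / (C + 1)" .
  moreover have "Phi (R - 1) (C + 1) = 1" "Phi R C = 1"
    using True by (simp_all add: Phi_conv_exp)
  ultimately show ?thesis
    using C by (simp add: field_simps)
next
  case False
  then show ?thesis
    using Phi_shift_average_le_exp exp_shift_exponent_le_Phi C RC by (meson not_less order_trans)
qed

lemma convex_square_div:
  fixes x0 x1 y0 y1 s :: real
  assumes "0 \<le> y0" "0 < y1" "y0 = 0 \<Longrightarrow> x0 = 0" "0 \<le> s" "s \<le> 1"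
  shows "((1 - s) * x0 + s * x1)\<^sup>2 / ((1 - s) * y0 + s * y1) \<le> (1 - s) * (x0\<^sup>2 / y0) + s * (x1\<^sup>2 / y1)"
proof (cases "s = 0 \<or> y0 = 0")
  case True
  then show ?thesis using assms by (auto simp: power2_eq_square field_simps)
next
  case False
  then have y0: "0 < y0" and s: "0 < s" using assms by auto
  have d: "0 < (1 - s) * y0 + s * y1"
    using assms y0 s by (smt (verit) mult_nonneg_nonneg mult_pos_pos)
  have "(1 - s) * (x0\<^sup>2 / y0) + s * (x1\<^sup>2 / y1) - ((1 - s) * x0 + s * x1)\<^sup>2 / ((1 - s) * y0 + s * y1)
      = (1 - s) * s * (x1 * y0 - x0 * y1)\<^sup>2 / (y0 * y1 * ((1 - s) * y0 + s * y1))"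
    using y0 assms(2) d by (simp add: field_simps power2_eq_square)
  also have "\<dots> \<ge> 0" using y0 assms d by (intro divide_nonneg_pos) auto
  finally show ?thesis by simp
qed

lemma Phi_convex_segment:
  fixes R C s e :: real
  assumes C: "0 \<le> C" and CR: "C = 0 \<Longrightarrow> R = 0" and s: "0 \<le> s" "s \<le> 1"
  shows "Phi (R + s * e) (C + s) \<le> (1 - s) * Phi R C + s * Phi (R + e) (C + 1)"
proof -
  define x0 where "x0 = max 0 R"
  define x1 where "x1 = max 0 (R + e)"
  have "max 0 (R + s * e) \<le> (1 - s) * x0 + s * x1"
  proof -
    have "(1 - s) * R \<le> (1 - s) * x0" "s * (R + e) \<le> s * x1"
      using s by (auto intro!: mult_left_mono simp: x0_def x1_def)
    moreover have "0 \<le> (1 - s) * x0" "0 \<le> s * x1" using s by (auto simp: x0_def x1_def)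
    ultimately show ?thesis by (simp add: algebra_simps)
  qed
  then have "(max 0 (R + s * e))\<^sup>2 / (3 * (C + s)) \<le> ((1 - s) * x0 + s * x1)\<^sup>2 / (3 * (C + s))"
    using C s by (intro divide_right_mono power_mono) auto
  also have "\<dots> \<le> (1 - s) * (x0\<^sup>2 / (3 * C)) + s * (x1\<^sup>2 / (3 * (C + 1)))"
    using convex_square_div[of "3 * C" "3 * (C + 1)" x0 s x1] C s CR
    by (simp add: x0_def algebra_simps)
  finally have "Phi (R + s * e) (C + s) \<le> exp ((1 - s) * (x0\<^sup>2 / (3 * C)) + s * (x1\<^sup>2 / (3 * (C + 1))))"
    by (simp add: Phi_conv_exp)
  also have "\<dots> \<le> (1 - s) * exp (x0\<^sup>2 / (3 * C)) + s * exp (x1\<^sup>2 / (3 * (C + 1)))"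
    using convex_onD[OF exp_convex, of s "x0\<^sup>2 / (3 * C)" "x1\<^sup>2 / (3 * (C + 1))"] s by simp
  finally show ?thesis by (simp add: Phi_conv_exp x0_def x1_def)
qed

(* The one-step inequality of AdaNormalHedge (Luo and Schapire): convexity of Phi along
   segments reduces an increment r to the increments 1 and -1. *)
lemma Phi_increment_le:
  fixes R C r :: real
  assumes C: "0 \<le> C" and RC: "\<bar>R\<bar> \<le> C" and r: "\<bar>r\<bar> \<le> 1"
  shows "Phi (R + r) (C + \<bar>r\<bar>) \<le> Phi R C + wt R C * r + 3/2 * \<bar>r\<bar> / (C + 1)"
proof -
  have CR: "C = 0 \<Longrightarrow> R = 0" using RC by simp
  have avg: "(Phi (R + 1) (C + 1) + Phi (R - 1) (C + 1)) / 2 \<le> Phi R C + (3/2) / (C + 1)"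
    by (rule Phi_shift_average_le[OF C RC])
  show ?thesis
  proof (cases "0 \<le> r")
    case True
    have "Phi (R + r) (C + r) \<le> (1 - r) * Phi R C + r * Phi (R + 1) (C + 1)"
      using Phi_convex_segment[OF C CR, of r 1] True r by simp
    also have "\<dots> = Phi R C + r * (Phi (R + 1) (C + 1) - Phi R C)" by (simp add: algebra_simps)
    also have "\<dots> \<le> Phi R C + r * (wt R C + (3/2) / (C + 1))"
      using avg True by (intro add_left_mono mult_left_mono) (auto simp: wt_def field_simps)
    finally show ?thesis using True by (simp add: algebra_simps)
  next
    case False
    have "Phi (R - \<bar>r\<bar>) (C + \<bar>r\<bar>) \<le> (1 - \<bar>r\<bar>) * Phi R C + \<bar>r\<bar> * Phi (R - 1) (C + 1)"
      using Phi_convex_segment[OF C CR, of "\<bar>r\<bar>" "-1"] r by simp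
    also have "\<dots> = Phi R C + \<bar>r\<bar> * (Phi (R - 1) (C + 1) - Phi R C)" by (simp add: algebra_simps)
    also have "\<dots> \<le> Phi R C + \<bar>r\<bar> * (- wt R C + (3/2) / (C + 1))"
      using avg by (intro add_left_mono mult_left_mono) (auto simp: wt_def field_simps)
    finally show ?thesis using False by (simp add: algebra_simps)
  qed
qed

lemma wt_nonneg:
  assumes "0 \<le> C"
  shows "0 \<le> wt R C"
proof -
  have "(max 0 (R - 1))\<^sup>2 / (3 * (C + 1)) \<le> (max 0 (R + 1))\<^sup>2 / (3 * (C + 1))"
    using assms by (intro divide_right_mono power_mono) auto
  then show ?thesis by (simp add: wt_def Phi_conv_exp)
qed

lemma sum_div_one_plus_prefix_sum_le:
  fixes x :: "nat \<Rightarrow> real"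
  assumes x: "\<And>u. u \<in> {a..<m} \<Longrightarrow> 0 \<le> x u \<and> x u \<le> 1"
  shows "(\<Sum>u = a..<m. x u / (1 + (\<Sum>v = a..<u. x v))) \<le> 1 + ln (1 + (\<Sum>u = a..<m. x u))"
proof -
  have step: "y / z \<le> ln (z + y) - ln z + 1 / z - 1 / (z + y)"
    if "1 \<le> z" "0 \<le> y" "y \<le> 1" for y z :: real
  proof -
    have "ln (z / (z + y)) \<le> z / (z + y) - 1"
      using that by (intro ln_le_minus_one) auto
    then have "y / (z + y) \<le> ln (z + y) - ln z"
      using that by (simp add: ln_div field_simps)
    moreover have "(y - 1) / z \<le> (y - 1) / (z + y)"
      using that by (intro divide_left_mono_neg) auto
    ultimately show ?thesis by (simp add: diff_divide_distrib)
  qed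
  have "(\<Sum>u = a..<m. x u / (1 + (\<Sum>v = a..<u. x v)))
      \<le> ln (1 + (\<Sum>u = a..<m. x u)) + 1 - 1 / (1 + (\<Sum>u = a..<m. x u))"
    using x
  proof (induction m)
    case (Suc m)
    show ?case
    proof (cases "a \<le> m")
      case True
      define S where "S = (\<Sum>u = a..<m. x u)"
      have "0 \<le> S" unfolding S_def using Suc.prems by (intro sum_nonneg) auto
      then have "x m / (1 + S) \<le> ln (1 + S + x m) - ln (1 + S) + 1 / (1 + S) - 1 / (1 + S + x m)"
        using step[of "1 + S" "x m"] Suc.prems True by simp
      then show ?thesis
        using Suc True by (simp add: S_def add.assoc)
    qed simp
  qed simp
  moreover have "0 \<le> (\<Sum>u = a..<m. x u)" using x by (intro sum_nonneg) auto
  ultimately show ?thesis by (smt (verit) divide_nonneg_nonneg)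
qed

lemma sum_sqrt_le_sqrt_card_mult_sum:
  fixes z :: "'b \<Rightarrow> real"
  assumes "\<And>j. j \<in> J \<Longrightarrow> 0 \<le> z j"
  shows "(\<Sum>j\<in>J. sqrt (z j)) \<le> sqrt (card J * (\<Sum>j\<in>J. z j))"
proof -
  have "(\<Sum>j\<in>J. 1 * sqrt (z j))\<^sup>2 \<le> (\<Sum>j\<in>J. 1\<^sup>2) * (\<Sum>j\<in>J. (sqrt (z j))\<^sup>2)"
    by (rule Cauchy_Schwarz_ineq_sum)
  also have "(\<Sum>j\<in>J. (sqrt (z j))\<^sup>2) = (\<Sum>j\<in>J. z j)"
    using assms by (intro sum.cong) auto
  finally show ?thesis by (simp add: real_le_rsqrt)
qed

section \<open>Online gradient descent\<close>

lemma convex_on_le_inner_gradient: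
  fixes f :: "'a::euclidean_space \<Rightarrow> real"
  assumes "convex \<Omega>" and f: "convex_on \<Omega> f"
    and d: "(f has_derivative (\<lambda>h. gr \<bullet> h)) (at x within \<Omega>)"
    and x: "x \<in> \<Omega>" and y: "y \<in> \<Omega>"
  shows "f x - f y \<le> gr \<bullet> (x - y)"
proof -
  define \<gamma> where "\<gamma> s = x + s *\<^sub>R (y - x)" for s :: real
  have \<gamma>_convex: "\<gamma> s = (1 - s) *\<^sub>R x + s *\<^sub>R y" for s
    by (simp add: \<gamma>_def algebra_simps)
  have "\<gamma> ` {0..1} \<subseteq> \<Omega>"
    using \<open>convex \<Omega>\<close> x y by (auto simp: \<gamma>_convex intro: convexD_alt)
  then have df: "(f has_derivative (\<lambda>h. gr \<bullet> h)) (at (\<gamma> 0) within \<gamma> ` {0..1})"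
    using has_derivative_subset[OF d] by (simp add: \<gamma>_def)
  have "(\<gamma> has_derivative (\<lambda>s. s *\<^sub>R (y - x))) (at 0 within {0..1})"
    unfolding \<gamma>_def by (auto intro!: derivative_eq_intros)
  from diff_chain_within[OF this df]
  have "((f \<circ> \<gamma>) has_derivative (\<lambda>h. gr \<bullet> h) \<circ> (\<lambda>s. s *\<^sub>R (y - x))) (at 0 within {0..1})" .
  moreover have "(\<lambda>h. gr \<bullet> h) \<circ> (\<lambda>s. s *\<^sub>R (y - x)) = (\<lambda>s. (gr \<bullet> (y - x)) * s)"
    by (auto simp: fun_eq_iff)
  ultimately have "((f \<circ> \<gamma>) has_real_derivative gr \<bullet> (y - x)) (at 0 within {0..1})"
    by (simp add: has_field_derivative_def)
  then have "((\<lambda>s. (f (\<gamma> s) - f (\<gamma> 0)) / s) \<longlongrightarrow> gr \<bullet> (y - x)) (at 0 within {0..1})"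
    by (simp add: has_field_derivative_iff)
  then have lim: "((\<lambda>s. (f (\<gamma> s) - f (\<gamma> 0)) / s) \<longlongrightarrow> gr \<bullet> (y - x)) (at 0 within {0<..1})"
    by (rule tendsto_within_subset) auto
  have "eventually (\<lambda>s. (f (\<gamma> s) - f (\<gamma> 0)) / s \<le> f y - f x) (at 0 within {0<..1})"
    unfolding eventually_at_filter
  proof (intro always_eventually allI impI)
    fix s :: real
    assume "s \<noteq> 0" and s: "s \<in> {0<..1}"
    then have "f (\<gamma> s) \<le> (1 - s) * f x + s * f y"
      using convex_onD[OF f] x y by (auto simp: \<gamma>_convex)
    then have "f (\<gamma> s) - f (\<gamma> 0) \<le> s * (f y - f x)"
      by (simp add: \<gamma>_def algebra_simps)
    then show "(f (\<gamma> s) - f (\<gamma> 0)) / s \<le> f y - f x"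
      using s by (simp add: divide_le_eq mult.commute)
  qed
  then have "gr \<bullet> (y - x) \<le> f y - f x"
    by (rule tendsto_upperbound[OF lim]) (simp add: at_within_eq_bot_iff)
  then show ?thesis by (simp add: inner_diff_right)
qed

lemma power2_norm_diff_shift_le:
  fixes a v v' :: "'a::real_normed_vector"
  assumes "norm (a - v) \<le> D" "norm (a - v') \<le> D"
  shows "(norm (a - v'))\<^sup>2 \<le> (norm (a - v))\<^sup>2 + 2 * D * norm (v' - v)"
proof -
  let ?\<delta> = "norm (a - v') - norm (a - v)"
  have "\<bar>?\<delta>\<bar> \<le> norm (v' - v)"
    using norm_triangle_ineq3[of "a - v'" "a - v"] by (simp add: norm_minus_commute)
  have "(norm (a - v'))\<^sup>2 - (norm (a - v))\<^sup>2 = ?\<delta> * (norm (a - v') + norm (a - v))"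
    by (simp add: power2_eq_square algebra_simps)
  also have "\<dots> \<le> \<bar>?\<delta>\<bar> * (2 * D)"
    using assms by (intro mult_mono) auto
  also have "\<dots> \<le> norm (v' - v) * (2 * D)"
    using \<open>\<bar>?\<delta>\<bar> \<le> norm (v' - v)\<close> assms(1) norm_ge_zero[of "a - v"]
    by (intro mult_right_mono) linarith+
  finally show ?thesis by (simp add: algebra_simps)
qed

lemma ogd_dynamic_regret:
  fixes \<Omega> :: "'a::euclidean_space set" and x u gr :: "nat \<Rightarrow> 'a"
  assumes "convex \<Omega>" "closed \<Omega>" and \<eta>: "0 < \<eta>"
    and x_in: "\<And>t. x t \<in> \<Omega>" and u_in: "\<And>t. t \<in> {1..T+1} \<Longrightarrow> u t \<in> \<Omega>"
    and step: "\<And>t. t \<in> {1..T} \<Longrightarrow> x (Suc t) = closest_point \<Omega> (x t - \<eta> *\<^sub>R gr t)"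
    and gr: "\<And>t. t \<in> {1..T} \<Longrightarrow> norm (gr t) \<le> G"
    and diam: "\<And>w w'. w \<in> \<Omega> \<Longrightarrow> w' \<in> \<Omega> \<Longrightarrow> norm (w - w') \<le> D"
  shows "(\<Sum>t = 1..T. gr t \<bullet> (x t - u t))
    \<le> (D\<^sup>2 + 2 * D * (\<Sum>t = 1..T. norm (u (t + 1) - u t))) / (2 * \<eta>) + \<eta> * G\<^sup>2 * T / 2"
proof -
  define d where "d t = (norm (x t - u t))\<^sup>2" for t
  have round: "2 * \<eta> * (gr t \<bullet> (x t - u t))
      \<le> d t - d (Suc t) + 2 * D * norm (u (t + 1) - u t) + \<eta>\<^sup>2 * G\<^sup>2" if t: "t \<in> {1..T}" for t
  proof -
    have u: "u t \<in> \<Omega>" "u (Suc t) \<in> \<Omega>" using u_in t by auto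
    have "norm (x (Suc t) - u t) \<le> norm ((x t - u t) - \<eta> *\<^sub>R gr t)"
      using closest_point_lipschitz[OF assms(1,2), of "x t - \<eta> *\<^sub>R gr t" "u t"]
        closest_point_self[OF u(1)] step[OF t] x_in
      by (auto simp: dist_norm algebra_simps)
    then have "(norm (x (Suc t) - u t))\<^sup>2 \<le> (norm ((x t - u t) - \<eta> *\<^sub>R gr t))\<^sup>2"
      by (simp add: power_mono)
    also have "\<dots> = d t - 2 * \<eta> * (gr t \<bullet> (x t - u t)) + \<eta>\<^sup>2 * (norm (gr t))\<^sup>2"
      unfolding d_def power2_norm_eq_inner
      by (simp add: inner_diff_left inner_diff_right inner_commute power2_eq_square algebra_simps)
    also have "\<dots> \<le> d t - 2 * \<eta> * (gr t \<bullet> (x t - u t)) + \<eta>\<^sup>2 * G\<^sup>2"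
      using gr[OF t] by (intro add_left_mono mult_left_mono power_mono) auto
    finally have "(norm (x (Suc t) - u t))\<^sup>2 \<le> d t - 2 * \<eta> * (gr t \<bullet> (x t - u t)) + \<eta>\<^sup>2 * G\<^sup>2" .
    moreover have "d (Suc t) \<le> (norm (x (Suc t) - u t))\<^sup>2 + 2 * D * norm (u (Suc t) - u t)"
      unfolding d_def by (rule power2_norm_diff_shift_le) (use diam x_in u in auto)
    ultimately show ?thesis by simp
  qed
  have "2 * \<eta> * (\<Sum>t = 1..T. gr t \<bullet> (x t - u t))
      \<le> (\<Sum>t = 1..T. d t - d (Suc t) + 2 * D * norm (u (t + 1) - u t) + \<eta>\<^sup>2 * G\<^sup>2)"
    unfolding sum_distrib_left using round by (rule sum_mono)
  also have "\<dots> = d 1 - d (Suc T) + 2 * D * (\<Sum>t = 1..T. norm (u (t + 1) - u t)) + \<eta>\<^sup>2 * G\<^sup>2 * T"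
    using sum_Suc_diff[of 1 T "\<lambda>t. - d t"] by (simp add: sum.distrib sum_distrib_left)
  also have "\<dots> \<le> D\<^sup>2 + 2 * D * (\<Sum>t = 1..T. norm (u (t + 1) - u t)) + \<eta>\<^sup>2 * G\<^sup>2 * T"
  proof -
    have "d 1 \<le> D\<^sup>2" unfolding d_def using diam x_in u_in by (auto intro: power_mono)
    moreover have "0 \<le> d (Suc T)" by (simp add: d_def)
    ultimately show ?thesis by linarith
  qed
  finally show ?thesis
    using \<eta> by (simp add: field_simps power2_eq_square)
qed

(* The hypotheses put L within a factor 2 of D T / P, which balances the last two terms. *)
lemma ogd_tuned_bound:
  fixes D G P T L :: real
  assumes D: "0 < D" and G: "0 \<le> G" and L: "0 < L" "L \<le> T"
    and PL: "P * L \<le> 2 * D * T" and DT: "D * T \<le> 2 * P * L"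
  shows "D * G * sqrt L / 2 + G * P * sqrt L + D * G * T / (2 * sqrt L)
    \<le> (D * G / 2 + 3 * G / 2 * sqrt (2 * D * P)) * sqrt T"
proof -
  have "0 < D * T" using D L by simp
  then have P: "0 < P" using DT L by (smt (verit) mult_nonpos_nonneg)
  have "P * sqrt L \<le> sqrt (2 * D * P * T)"
  proof (rule real_le_rsqrt)
    have "(P * sqrt L)\<^sup>2 = P * (P * L)" using L by (simp add: power2_eq_square)
    also have "\<dots> \<le> P * (2 * D * T)" using P PL by (intro mult_left_mono) auto
    finally show "(P * sqrt L)\<^sup>2 \<le> 2 * D * P * T" by (simp add: algebra_simps)
  qed
  moreover have "D * T / (2 * sqrt L) \<le> sqrt (2 * D * P * T) / 2"
  proof -
    have "(D * T / (2 * sqrt L))\<^sup>2 = D * T * (D * T) / (4 * L)"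
      using L by (simp add: power2_eq_square)
    also have "\<dots> \<le> D * T * (2 * P * L) / (4 * L)"
      using \<open>0 < D * T\<close> L DT by (intro divide_right_mono mult_left_mono) auto
    also have "\<dots> = 2 * D * P * T / 4"
      using L by (simp add: field_simps)
    finally have "D * T / (2 * sqrt L) \<le> sqrt (2 * D * P * T / 4)"
      by (rule real_le_rsqrt)
    moreover have "sqrt (4::real) = 2" by (rule real_sqrt_unique) auto
    ultimately show ?thesis by (simp only: real_sqrt_divide)
  qed
  ultimately have "P * sqrt L + D * T / (2 * sqrt L) \<le> 3 / 2 * sqrt (2 * D * P * T)"
    by linarith
  then have "G * (P * sqrt L) + G * (D * T / (2 * sqrt L)) \<le> G * (3 / 2 * sqrt (2 * D * P * T))"
    using mult_left_mono[OF _ G] by (simp only: distrib_left[symmetric])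
  moreover have "D * G * sqrt L / 2 \<le> D * G * sqrt T / 2"
    using D G L by (intro divide_right_mono mult_left_mono) auto
  ultimately show ?thesis
    by (simp add: real_sqrt_mult algebra_simps)
qed

section \<open>Regret of AOD\<close>

lemma length_aod_hist [simp]: "length (aod_hist \<Omega> D G T f g init n) = n"
  by (induction n) auto

lemma aod_hist_nth: "u < n \<Longrightarrow> aod_hist \<Omega> D G T f g init n ! u = aod \<Omega> D G T f g init (Suc u)"
  by (induction n) (auto simp: aod_def nth_append less_Suc_eq)

lemma aod_step_cong:
  assumes "\<And>u. 1 \<le> u \<Longrightarrow> u < t \<Longrightarrow> w u = w' u"
  shows "aod_step \<Omega> D G T f g init w t = aod_step \<Omega> D G T f g init w' t"
proof -
  have same_sums: "(\<Sum>u = iv_start (fst I) (snd I)..<t. F I u (w u))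
      = (\<Sum>u = iv_start (fst I) (snd I)..<t. F I u (w' u))"
    for I and F :: "nat \<times> nat \<Rightarrow> nat \<Rightarrow> 'a \<Rightarrow> real"
    using assms by (intro sum.cong) (auto simp: iv_start_def)
  show ?thesis
    unfolding aod_step_def Let_def
    by (simp only: same_sums[where F = "\<lambda>I u v. f u v - f u (expert_pt \<Omega> D G g init I u)"]
        same_sums[where F = "\<lambda>I u v. \<bar>f u v - f u (expert_pt \<Omega> D G g init I u)\<bar>"])
qed

lemma aod_unfold:
  assumes "1 \<le> t"
  shows "aod \<Omega> D G T f g init t = aod_step \<Omega> D G T f g init (aod \<Omega> D G T f g init) t"
proof -
  obtain n where t: "t = Suc n" using assms by (cases t) auto
  have "aod \<Omega> D G T f g init t = aod_step \<Omega> D G T f g init (\<lambda>u. aod_hist \<Omega> D G T f g init n ! (u - 1)) t"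
    by (simp add: aod_def t nth_append)
  also have "\<dots> = aod_step \<Omega> D G T f g init (aod \<Omega> D G T f g init) t"
    by (rule aod_step_cong) (simp add: t aod_hist_nth)
  finally show ?thesis .
qed

lemma finite_active: "finite (active T t)"
proof (rule finite_subset)
  show "active T t \<subseteq> {..T} \<times> {..t}"
  proof
    fix I assume "I \<in> active T t"
    then obtain k j where I: "I = (k, j)" "2 ^ k \<le> T" "(j - 1) * 2 ^ k + 1 \<le> t"
      by (auto simp: active_def DGC_def iv_start_def)
    have "k < 2 ^ k" "j - 1 \<le> (j - 1) * 2 ^ k" by (simp_all add: less_exp)
    then have "k \<le> T" "j \<le> t" using I by linarith+
    then show "I \<in> {..T} \<times> {..t}" using I by auto
  qed
qed simp

lemma cT_nonneg: "1 \<le> T \<Longrightarrow> 0 \<le> cT T"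
  unfolding cT_def by (intro add_nonneg_nonneg) (auto simp: add_nonneg_nonneg)

locale aod_setting =
  fixes \<Omega> :: "'a::euclidean_space set" and D G :: real and T :: nat
    and f :: "nat \<Rightarrow> 'a \<Rightarrow> real" and g :: "nat \<Rightarrow> 'a \<Rightarrow> 'a" and init :: "nat \<Rightarrow> 'a"
  assumes convex_dom: "convex \<Omega>" and closed_dom: "closed \<Omega>"
    and cvx: "\<And>t. t \<in> {1..T} \<Longrightarrow> convex_on \<Omega> (f t)"
    and grad: "\<And>t w. t \<in> {1..T} \<Longrightarrow> w \<in> \<Omega> \<Longrightarrow>
                  (f t has_derivative (\<lambda>h. g t w \<bullet> h)) (at w within \<Omega>)"
    and A1: "\<And>t w. t \<in> {1..T} \<Longrightarrow> w \<in> \<Omega> \<Longrightarrow> norm (g t w) \<le> G"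
    and A2a: "0 \<in> \<Omega>"
    and A2b: "\<And>w w'. w \<in> \<Omega> \<Longrightarrow> w' \<in> \<Omega> \<Longrightarrow> norm (w - w') \<le> D"
    and A3: "\<And>t w. t \<in> {1..T} \<Longrightarrow> w \<in> \<Omega> \<Longrightarrow> 0 \<le> f t w \<and> f t w \<le> 1"
    and init_in: "\<And>k. init k \<in> \<Omega>"
begin

definition played :: "nat \<Rightarrow> 'a" where
  "played t = aod \<Omega> D G T f g init t"

(* All intervals of length 2^k share one gradient descent sequence (see ogd), so an expert is
   identified by its level. *)
definition expert :: "nat \<Rightarrow> nat \<Rightarrow> 'a" where
  "expert k t = ogd \<Omega> D G g init k t"

definition regret :: "nat \<times> nat \<Rightarrow> nat \<Rightarrow> real" where
  "regret I t = f t (played t) - f t (expert (fst I) t)"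

definition past :: "nat \<times> nat \<Rightarrow> nat \<Rightarrow> nat set" where
  "past I t = {u. iv_start (fst I) (snd I) \<le> u \<and> u < t \<and> u \<le> iv_end (fst I) (snd I)}"

definition cum_regret :: "nat \<times> nat \<Rightarrow> nat \<Rightarrow> real" where
  "cum_regret I t = (\<Sum>u\<in>past I t. regret I u)"

definition cum_abs_regret :: "nat \<times> nat \<Rightarrow> nat \<Rightarrow> real" where
  "cum_abs_regret I t = (\<Sum>u\<in>past I t. \<bar>regret I u\<bar>)"

definition weight :: "nat \<times> nat \<Rightarrow> nat \<Rightarrow> real" where
  "weight I t = wt (cum_regret I t) (cum_abs_regret I t)"

lemma expert_in: "expert k t \<in> \<Omega>"
proof -
  have "\<Omega> \<noteq> {}" using A2a by auto
  then show ?thesis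
    unfolding expert_def
    by (induction t) (auto simp: init_in proj_def closest_point_in_set[OF closed_dom])
qed

lemma expert_Suc:
  "1 \<le> t \<Longrightarrow> expert k (Suc t) = closest_point \<Omega> (expert k t - eta D G k *\<^sub>R g t (expert k t))"
  by (simp add: expert_def proj_def)

lemma finite_past: "finite (past I t)"
  by (rule finite_subset[of _ "{..<t}"]) (auto simp: past_def)

lemma past_active: "I \<in> active T t \<Longrightarrow> past I t = {iv_start (fst I) (snd I)..<t}"
  by (auto simp: past_def active_def)

lemma cum_abs_regret_nonneg: "0 \<le> cum_abs_regret I t"
  unfolding cum_abs_regret_def by (intro sum_nonneg) auto

lemma abs_cum_regret_le: "\<bar>cum_regret I t\<bar> \<le> cum_abs_regret I t"
  unfolding cum_regret_def cum_abs_regret_def by (rule sum_abs)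

lemma weight_nonneg: "0 \<le> weight I t"
  unfolding weight_def by (rule wt_nonneg[OF cum_abs_regret_nonneg])

lemma played_eq:
  assumes "1 \<le> t"
  shows "played t = (\<Sum>I\<in>active T t. (weight I t / (\<Sum>J\<in>active T t. weight J t)) *\<^sub>R expert (fst I) t)"
proof -
  have "(\<Sum>u = iv_start (fst I) (snd I)..<t. f u (aod \<Omega> D G T f g init u) - f u (ogd \<Omega> D G g init (fst I) u))
      = cum_regret I t"
    and "(\<Sum>u = iv_start (fst I) (snd I)..<t. \<bar>f u (aod \<Omega> D G T f g init u) - f u (ogd \<Omega> D G g init (fst I) u)\<bar>)
      = cum_abs_regret I t" if "I \<in> active T t" for I
    using that by (simp_all add: cum_regret_def cum_abs_regret_def past_active regret_def played_def expert_def)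
  then show ?thesis
    unfolding played_def aod_unfold[OF assms] aod_step_def Let_def
    by (simp add: weight_def expert_def expert_pt_def cong: sum.cong)
qed

lemma played_in:
  assumes "1 \<le> t"
  shows "played t \<in> \<Omega>"
proof (cases "(\<Sum>J\<in>active T t. weight J t) = 0")
  case True
  \<comment> \<open>Division by the zero total weight makes the played point 0; this is where 0 \<in> \<Omega> is needed.\<close>
  then show ?thesis using A2a by (simp add: played_eq[OF assms])
next
  case False
  then have "0 < (\<Sum>J\<in>active T t. weight J t)"
    using sum_nonneg[of "active T t" "\<lambda>J. weight J t"] weight_nonneg by (simp add: order_less_le)
  then show ?thesis
    unfolding played_eq[OF assms]
    by (intro convex_sum[OF finite_active convex_dom])
      (auto simp: weight_nonneg expert_in simp flip: sum_divide_distrib)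
qed

lemma weighted_regret_nonpos:
  assumes t: "t \<in> {1..T}"
  shows "(\<Sum>I\<in>active T t. weight I t * regret I t) \<le> 0"
proof (cases "(\<Sum>J\<in>active T t. weight J t) = 0")
  case True
  then have "weight I t = 0" if "I \<in> active T t" for I
    using True that by (simp add: sum_nonneg_eq_0_iff[OF finite_active] weight_nonneg)
  then show ?thesis by simp
next
  case False
  define W where "W = (\<Sum>J\<in>active T t. weight J t)"
  have W: "0 < W"
    using False sum_nonneg[of "active T t" "\<lambda>J. weight J t"] weight_nonneg
    by (simp add: W_def order_less_le)
  have "1 \<le> t" using t by simp
  have jensen: "f t (played t) \<le> (\<Sum>I\<in>active T t. (weight I t / W) * f t (expert (fst I) t))"
    unfolding played_eq[OF \<open>1 \<le> t\<close>] W_def[symmetric] using False W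
    by (intro convex_on_sum[OF finite_active _ cvx[OF t]])
      (auto simp: W_def weight_nonneg expert_in simp flip: sum_divide_distrib)
  have "(\<Sum>I\<in>active T t. weight I t * regret I t)
      = W * f t (played t) - (\<Sum>I\<in>active T t. weight I t * f t (expert (fst I) t))"
    by (simp add: regret_def right_diff_distrib sum_subtractf sum_distrib_right W_def)
  also have "(\<Sum>I\<in>active T t. weight I t * f t (expert (fst I) t))
      = W * (\<Sum>I\<in>active T t. (weight I t / W) * f t (expert (fst I) t))"
    using W by (simp add: sum_distrib_left)
  finally have "(\<Sum>I\<in>active T t. weight I t * regret I t)
      = W * (f t (played t) - (\<Sum>I\<in>active T t. (weight I t / W) * f t (expert (fst I) t)))"
    by (simp add: right_diff_distrib)
  also have "\<dots> \<le> 0"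
    using jensen W by (intro mult_nonneg_nonpos) auto
  finally show ?thesis .
qed

lemma abs_regret_le_1: "t \<in> {1..T} \<Longrightarrow> \<bar>regret I t\<bar> \<le> 1"
  using A3[of t "played t"] A3[of t "expert (fst I) t"] played_in[of t] expert_in
  unfolding regret_def by (auto simp: abs_le_iff)

definition experts :: "(nat \<times> nat) set" where
  "experts = {k. 2 ^ k \<le> T} \<times> {1..T}"

definition potential :: "nat \<Rightarrow> real" where
  "potential t = (\<Sum>I\<in>experts. Phi (cum_regret I t) (cum_abs_regret I t))"

definition excess :: "nat \<times> nat \<Rightarrow> nat \<Rightarrow> real" where
  "excess I t = (if I \<in> active T t then 3/2 * \<bar>regret I t\<bar> / (cum_abs_regret I t + 1) else 0)"

lemma finite_experts: "finite experts"
proof -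
  have "k \<le> T" if "2 ^ k \<le> T" for k
    using less_exp[of k] that by linarith
  then have "{k. 2 ^ k \<le> T} \<subseteq> {..T}" by auto
  then show ?thesis unfolding experts_def by (auto intro: finite_subset)
qed

lemma active_subset_experts: "t \<le> T \<Longrightarrow> active T t \<subseteq> experts"
proof
  fix I assume "t \<le> T" "I \<in> active T t"
  then obtain k j where I: "I = (k, j)" "2 ^ k \<le> T" "1 \<le> j" "(j - 1) * 2 ^ k + 1 \<le> t"
    by (auto simp: active_def DGC_def iv_start_def)
  have "j - 1 \<le> (j - 1) * 2 ^ k" by simp
  then have "j \<le> T" using I \<open>t \<le> T\<close> by linarith
  then show "I \<in> experts" using I by (auto simp: experts_def)
qed

lemma Phi_cum_regret_Suc_le:
  assumes I: "I \<in> experts" and t: "t \<in> {1..T}"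
  shows "Phi (cum_regret I (Suc t)) (cum_abs_regret I (Suc t))
    \<le> Phi (cum_regret I t) (cum_abs_regret I t)
      + (if I \<in> active T t then weight I t * regret I t else 0) + excess I t"
proof (cases "I \<in> active T t")
  case True
  then have "past I (Suc t) = insert t (past I t)" "t \<notin> past I t"
    by (auto simp: past_def active_def)
  then have "cum_regret I (Suc t) = cum_regret I t + regret I t"
    and "cum_abs_regret I (Suc t) = cum_abs_regret I t + \<bar>regret I t\<bar>"
    by (simp_all add: cum_regret_def cum_abs_regret_def finite_past)
  then show ?thesis
    using Phi_increment_le[OF cum_abs_regret_nonneg abs_cum_regret_le abs_regret_le_1[OF t]] True
    by (simp add: weight_def excess_def)
next
  case False
  then have "past I (Suc t) = past I t"
    using I by (auto simp: past_def active_def DGC_def experts_def)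
  then show ?thesis using False by (simp add: cum_regret_def cum_abs_regret_def excess_def)
qed

lemma potential_Suc_le:
  assumes t: "t \<in> {1..T}"
  shows "potential (Suc t) \<le> potential t + (\<Sum>I\<in>experts. excess I t)"
proof -
  have "(\<Sum>I\<in>experts. if I \<in> active T t then weight I t * regret I t else 0)
      = (\<Sum>I\<in>active T t. weight I t * regret I t)"
    using active_subset_experts[of t] t
    by (simp add: sum.inter_restrict[OF finite_experts, symmetric] Int_absorb1)
  also have "\<dots> \<le> 0" by (rule weighted_regret_nonpos[OF t])
  finally have nonpos: "(\<Sum>I\<in>experts. if I \<in> active T t then weight I t * regret I t else 0) \<le> 0" .
  have "potential (Suc t) \<le> (\<Sum>I\<in>experts. Phi (cum_regret I t) (cum_abs_regret I t)
      + (if I \<in> active T t then weight I t * regret I t else 0) + excess I t)"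
    unfolding potential_def by (intro sum_mono Phi_cum_regret_Suc_le[OF _ t])
  also have "\<dots> = potential t + (\<Sum>I\<in>experts. if I \<in> active T t then weight I t * regret I t else 0)
      + (\<Sum>I\<in>experts. excess I t)"
    by (simp add: potential_def sum.distrib)
  finally show ?thesis using nonpos by linarith
qed

lemma potential_1: "potential 1 = card experts"
proof -
  have "past I 1 = {}" for I by (auto simp: past_def iv_start_def)
  then show ?thesis by (simp add: potential_def cum_regret_def cum_abs_regret_def Phi_def)
qed

lemma sum_excess_le:
  assumes "I \<in> experts"
  shows "(\<Sum>t = 1..T. excess I t) \<le> 3/2 * (1 + ln (1 + real T))"
proof -
  define a where "a = iv_start (fst I) (snd I)"
  define m where "m = min (Suc T) (Suc (iv_end (fst I) (snd I)))"
  have a: "1 \<le> a" by (simp add: a_def iv_start_def)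
  have rounds: "{t \<in> {1..T}. I \<in> active T t} = {a..<m}"
    using assms a by (auto simp: active_def DGC_def experts_def a_def m_def)
  have past: "past I t = {a..<t}" if "a \<le> t" "t < m" for t
    using that by (auto simp: past_def a_def m_def)
  have r: "0 \<le> \<bar>regret I t\<bar> \<and> \<bar>regret I t\<bar> \<le> 1" if "t \<in> {a..<m}" for t
    using that a by (auto simp: m_def intro!: abs_regret_le_1)
  have "(\<Sum>t = 1..T. excess I t) = (\<Sum>t = a..<m. 3/2 * \<bar>regret I t\<bar> / (cum_abs_regret I t + 1))"
    unfolding excess_def sum.inter_filter[symmetric, OF finite_atLeastAtMost] rounds ..
  also have "\<dots> = 3/2 * (\<Sum>t = a..<m. \<bar>regret I t\<bar> / (1 + (\<Sum>v = a..<t. \<bar>regret I v\<bar>)))"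
    unfolding sum_distrib_left by (intro sum.cong refl) (simp add: cum_abs_regret_def past add.commute)
  also have "\<dots> \<le> 3/2 * (1 + ln (1 + (\<Sum>t = a..<m. \<bar>regret I t\<bar>)))"
    using r by (intro mult_left_mono sum_div_one_plus_prefix_sum_le) auto
  also have "\<dots> \<le> 3/2 * (1 + ln (1 + real T))"
  proof -
    have "(\<Sum>t = a..<m. \<bar>regret I t\<bar>) \<le> real (m - a)"
      using sum_mono[of "{a..<m}" "\<lambda>t. \<bar>regret I t\<bar>" "\<lambda>_. 1"] r by simp
    also have "\<dots> \<le> real T" using a by (simp add: m_def)
    finally have "(\<Sum>t = a..<m. \<bar>regret I t\<bar>) \<le> real T" .
    moreover have "0 \<le> (\<Sum>t = a..<m. \<bar>regret I t\<bar>)" by (intro sum_nonneg) auto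
    ultimately have "ln (1 + (\<Sum>t = a..<m. \<bar>regret I t\<bar>)) \<le> ln (1 + real T)"
      by (intro ln_mono) linarith+
    then show ?thesis by simp
  qed
  finally show ?thesis .
qed

lemma card_experts_le:
  assumes "1 \<le> T"
  shows "real (card experts) \<le> real T * (1 + log 2 (real T))"
proof -
  have "k \<le> nat \<lfloor>log 2 (real T)\<rfloor>" if "2 ^ k \<le> T" for k
  proof -
    have "real k \<le> log 2 (real T)" using le_log2_of_power[OF that] .
    then have "int k \<le> \<lfloor>log 2 (real T)\<rfloor>" by (simp add: le_floor_iff)
    then show ?thesis by simp
  qed
  then have "{k. 2 ^ k \<le> T} \<subseteq> {..nat \<lfloor>log 2 (real T)\<rfloor>}" by auto
  then have "card {k. 2 ^ k \<le> T} \<le> Suc (nat \<lfloor>log 2 (real T)\<rfloor>)"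
    using card_mono[of "{..nat \<lfloor>log 2 (real T)\<rfloor>}"] by fastforce
  moreover have "0 \<le> log 2 (real T)" using assms by simp
  ultimately have "real (card {k. 2 ^ k \<le> T}) \<le> 1 + log 2 (real T)" by linarith
  then show ?thesis
    by (simp add: experts_def card_cartesian_product mult.commute mult_left_mono)
qed

(* This is where c(T) comes from: apart from its leading 1 it is the logarithm of the bound
   on the final potential. *)
lemma potential_le_exp_cT:
  assumes T: "1 \<le> T"
  shows "potential (Suc T) \<le> exp (cT T - 1)"
proof -
  have "potential (Suc n) \<le> card experts + (\<Sum>t = 1..n. \<Sum>I\<in>experts. excess I t)" if "n \<le> T" for n
    using that
  proof (induction n)
    case 0
    then show ?case using potential_1 by simp
  next
    case (Suc n)
    then show ?case using potential_Suc_le[of "Suc n"] by simp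
  qed
  also have "(\<Sum>t = 1..T. \<Sum>I\<in>experts. excess I t) = (\<Sum>I\<in>experts. \<Sum>t = 1..T. excess I t)"
    by (rule sum.swap)
  also have "\<dots> \<le> (\<Sum>I\<in>experts. 3/2 * (1 + ln (1 + real T)))"
    by (intro sum_mono sum_excess_le)
  also have "real (card experts) + \<dots> = card experts * ((5 + 3 * ln (1 + real T)) / 2)"
    by (simp add: algebra_simps)
  also have "\<dots> \<le> real T * (1 + log 2 (real T)) * ((5 + 3 * ln (1 + real T)) / 2)"
    by (intro mult_right_mono card_experts_le[OF T]) (simp add: add_nonneg_nonneg)
  also have "\<dots> = exp (cT T - 1)"
    using T by (simp add: cT_def exp_add exp_diff add_pos_nonneg)
  finally show ?thesis by simp
qed

lemma cum_regret_le:
  assumes T: "1 \<le> T" and k: "2 ^ k \<le> T" and j: "1 \<le> j"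
  shows "cum_regret (k, j) (Suc T) \<le> sqrt (3 * cT T * card (past (k, j) (Suc T)))"
proof (cases "0 < cum_regret (k, j) (Suc T)")
  case False
  then show ?thesis using cT_nonneg[OF T] by (smt (verit) mult_nonneg_nonneg of_nat_0_le_iff real_sqrt_ge_zero)
next
  case True
  let ?R = "cum_regret (k, j) (Suc T)" and ?C = "cum_abs_regret (k, j) (Suc T)"
  have "past (k, j) (Suc T) \<noteq> {}" using True by (auto simp: cum_regret_def)
  then obtain u where "(j - 1) * 2 ^ k + 1 \<le> u" "u \<le> T" by (auto simp: past_def iv_start_def)
  moreover have "j - 1 \<le> (j - 1) * 2 ^ k" by simp
  ultimately have "j \<le> T" using j by linarith
  then have I: "(k, j) \<in> experts" using k j by (simp add: experts_def)
  have C: "0 < ?C" using True abs_cum_regret_le[of "(k, j)" "Suc T"] by linarith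
  have "exp (?R\<^sup>2 / (3 * ?C)) = Phi ?R ?C" using True by (simp add: Phi_conv_exp)
  also have "\<dots> \<le> potential (Suc T)"
    unfolding potential_def using I finite_experts by (intro member_le_sum) (auto simp: Phi_conv_exp)
  also have "\<dots> \<le> exp (cT T)" using potential_le_exp_cT[OF T] by (smt (verit) exp_le_cancel_iff)
  finally have "?R\<^sup>2 \<le> 3 * cT T * ?C" using C by (simp add: field_simps)
  also have "?C \<le> card (past (k, j) (Suc T))"
    unfolding cum_abs_regret_def
    using sum_mono[of "past (k, j) (Suc T)" "\<lambda>u. \<bar>regret (k, j) u\<bar>" "\<lambda>_. 1"] abs_regret_le_1
    by (force simp: past_def iv_start_def)
  finally show ?thesis
    using cT_nonneg[OF T] by (intro real_le_rsqrt) (simp add: mult_left_mono)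
qed

lemma past_Suc_T_eq:
  assumes "1 \<le> j"
  shows "past (k, j) (Suc T) = {t \<in> {1..T}. (t - 1) div 2 ^ k + 1 = j}"
proof -
  have jL: "j * 2 ^ k = (j - 1) * 2 ^ k + 2 ^ k"
    using assms by (cases j) auto
  have block: "(t - 1) div 2 ^ k = j - 1 \<longleftrightarrow> (j - 1) * 2 ^ k + 1 \<le> t \<and> t \<le> j * 2 ^ k"
    if "1 \<le> t" for t
  proof
    assume q: "(t - 1) div 2 ^ k = j - 1"
    have "0 < (2::nat) ^ k" by simp
    then show "(j - 1) * 2 ^ k + 1 \<le> t \<and> t \<le> j * 2 ^ k"
      using div_times_less_eq_dividend[of "t - 1" "2 ^ k"] dividend_less_div_times[of "2 ^ k" "t - 1"]
        that jL unfolding q by linarith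
  next
    assume "(j - 1) * 2 ^ k + 1 \<le> t \<and> t \<le> j * 2 ^ k"
    then show "(t - 1) div 2 ^ k = j - 1"
      using jL by (intro div_nat_eqI) (auto simp: mult.commute)
  qed
  show ?thesis
  proof (rule set_eqI)
    fix t
    have "t \<in> past (k, j) (Suc T) \<longleftrightarrow> 1 \<le> t \<and> t \<le> T \<and> (j - 1) * 2 ^ k + 1 \<le> t \<and> t \<le> j * 2 ^ k"
      by (auto simp: past_def iv_start_def iv_end_def)
    also have "\<dots> \<longleftrightarrow> 1 \<le> t \<and> t \<le> T \<and> (t - 1) div 2 ^ k = j - 1"
      using block by blast
    also have "\<dots> \<longleftrightarrow> t \<in> {t \<in> {1..T}. (t - 1) div 2 ^ k + 1 = j}"
      using assms by auto
    finally show "t \<in> past (k, j) (Suc T) \<longleftrightarrow> t \<in> {t \<in> {1..T}. (t - 1) div 2 ^ k + 1 = j}" .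
  qed
qed

lemma meta_regret:
  assumes T: "1 \<le> T" and k: "2 ^ k \<le> T" and n: "T \<le> n * 2 ^ k"
  shows "(\<Sum>t = 1..T. f t (played t) - f t (expert k t)) \<le> sqrt (3 * cT T * n * T)"
proof -
  define q :: "nat \<Rightarrow> nat" where "q t = (t - 1) div 2 ^ k + 1" for t
  have q: "q ` {1..T} \<subseteq> {1..n}"
  proof
    fix j assume "j \<in> q ` {1..T}"
    then obtain t where t: "t \<in> {1..T}" "j = q t" by auto
    then have "1 \<le> t" "t \<le> T" by auto
    then have "t - 1 < n * 2 ^ k" using n by linarith
    then have "(t - 1) div 2 ^ k < n" by (simp add: div_less_iff_less_mult)
    then show "j \<in> {1..n}" using t by (simp add: q_def)
  qed
  have blocks: "{t \<in> {1..T}. q t = j} = past (k, j) (Suc T)" if "j \<in> {1..n}" for j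
    using past_Suc_T_eq[of j] that by (simp add: q_def)
  have "(\<Sum>t = 1..T. f t (played t) - f t (expert k t))
      = (\<Sum>j\<in>{1..n}. \<Sum>t\<in>{t \<in> {1..T}. q t = j}. regret (k, j) t)"
    by (subst sum.group[OF _ _ q, symmetric]) (auto simp: regret_def)
  also have "\<dots> = (\<Sum>j\<in>{1..n}. cum_regret (k, j) (Suc T))"
    using blocks by (simp add: cum_regret_def)
  also have "\<dots> \<le> (\<Sum>j\<in>{1..n}. sqrt (3 * cT T * card (past (k, j) (Suc T))))"
    using T k by (intro sum_mono cum_regret_le) auto
  also have "\<dots> \<le> sqrt (card {1..n} * (\<Sum>j\<in>{1..n}. 3 * cT T * card (past (k, j) (Suc T))))"
    using cT_nonneg[OF T] by (intro sum_sqrt_le_sqrt_card_mult_sum) auto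
  also have "(\<Sum>j\<in>{1..n}. card (past (k, j) (Suc T))) = T"
    using sum.group[OF _ _ q, of "\<lambda>_. 1::nat"] blocks by simp
  then have "(\<Sum>j\<in>{1..n}. 3 * cT T * card (past (k, j) (Suc T))) = 3 * cT T * T"
    by (simp flip: sum_distrib_left of_nat_sum)
  finally show ?thesis by (simp add: mult_ac)
qed

lemma expert_dynamic_regret:
  fixes u :: "nat \<Rightarrow> 'a"
  assumes D: "0 < D" and G: "0 \<le> G" and u_in: "\<And>t. t \<in> {1..T+1} \<Longrightarrow> u t \<in> \<Omega>"
  defines "P \<equiv> \<Sum>t = 1..T. norm (u (t + 1) - u t)"
  shows "(\<Sum>t = 1..T. f t (expert k t) - f t (u t))
    \<le> D * G * sqrt (2 ^ k) / 2 + G * P * sqrt (2 ^ k) + D * G * T / (2 * sqrt (2 ^ k))"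
proof -
  have "(\<Sum>t = 1..T. f t (expert k t) - f t (u t)) \<le> (\<Sum>t = 1..T. g t (expert k t) \<bullet> (expert k t - u t))"
    by (intro sum_mono convex_on_le_inner_gradient[OF convex_dom cvx grad])
      (auto simp: expert_in u_in)
  also have "\<dots> \<le> D * G * sqrt (2 ^ k) / 2 + G * P * sqrt (2 ^ k) + D * G * T / (2 * sqrt (2 ^ k))"
  proof (cases "G = 0")
    case True
    then have "g t (expert k t) = 0" if "t \<in> {1..T}" for t
      using A1[OF that expert_in] by simp
    then show ?thesis using True by simp
  next
    case False
    define \<eta> where "\<eta> = eta D G k"
    have \<eta>: "\<eta> = D / (G * sqrt (2 ^ k))" "0 < \<eta>"
      using D G False by (simp_all add: \<eta>_def eta_def)
    have "(\<Sum>t = 1..T. g t (expert k t) \<bullet> (expert k t - u t)) \<le> (D\<^sup>2 + 2 * D * P) / (2 * \<eta>) + \<eta> * G\<^sup>2 * T / 2"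
      unfolding P_def
      by (rule ogd_dynamic_regret[OF convex_dom closed_dom \<eta>(2) expert_in u_in _ A1 A2b])
        (auto simp: expert_Suc \<eta>_def expert_in)
    also have "\<dots> = D * G * sqrt (2 ^ k) / 2 + G * P * sqrt (2 ^ k) + D * G * T / (2 * sqrt (2 ^ k))"
      using D G False unfolding \<eta>(1) by (simp add: field_simps power2_eq_square)
    finally show ?thesis .
  qed
  finally show ?thesis .
qed

end

lemma dyadic_level:
  fixes D P :: real and T i :: nat
  assumes i: "i \<in> {1..nat \<lceil>log 2 (real T)\<rceil>}"
    and P: "D * 2 ^ (i - 1) < P" "P \<le> D * 2 ^ i"
  defines "k \<equiv> nat \<lceil>log 2 (real T)\<rceil> - i"
  shows "1 \<le> T" and "0 < D" and "2 ^ k \<le> T" and "T \<le> 2 ^ i * 2 ^ k"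
    and "P * 2 ^ k \<le> 2 * D * T" and "D * T \<le> 2 * P * 2 ^ k" and "2 ^ i \<le> 1 + 2 * P / D"
proof -
  show T: "1 \<le> T"
    using i by (cases "T = 0") (auto simp: log_def)
  then have s: "nat \<lceil>log 2 (real T)\<rceil> = ceillog2 T"
    by (simp add: ceillog2_def)
  have i1: "1 \<le> i" and "i + k = ceillog2 T"
    using i by (auto simp: k_def s)
  then have ik: "2 ^ i * 2 ^ k = (2::nat) ^ ceillog2 T"
    by (simp flip: power_add)
  have i2: "(2::real) ^ i = 2 * 2 ^ (i - 1)"
    using i1 by (simp flip: power_Suc)
  have Ts: "T \<le> 2 ^ i * 2 ^ k" "2 ^ i * 2 ^ k < 2 * T"
    unfolding ik using T by (auto simp: le_two_power_ceillog2 two_power_ceillog2_gt)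
  then show "T \<le> 2 ^ i * 2 ^ k" by simp
  show D: "0 < D"
    using P i2 by (smt (verit) mult_le_cancel_left zero_less_power)
  have "2 * 2 ^ k \<le> (2::nat) ^ i * 2 ^ k"
    using i1 self_le_power[of "2::nat" i] by (intro mult_right_mono) auto
  then show "2 ^ k \<le> T" using Ts by linarith
  have "real T \<le> real (2 ^ i * 2 ^ k)" "real (2 ^ i * 2 ^ k) < real (2 * T)"
    using Ts by (simp only: of_nat_le_iff of_nat_less_iff)+
  then have Ts': "real T \<le> 2 ^ i * 2 ^ k" "2 ^ i * 2 ^ k < 2 * real T"
    by simp_all
  have "P * 2 ^ k \<le> D * (2 ^ i * 2 ^ k)"
    using P by (simp add: mult.assoc[symmetric] mult_right_mono)
  also have "\<dots> \<le> 2 * D * T"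
    using D Ts' by (simp add: mult.assoc mult_left_mono)
  finally show "P * 2 ^ k \<le> 2 * D * T" .
  have "D * T \<le> D * (2 ^ i * 2 ^ k)"
    using D Ts' by (simp add: mult_left_mono)
  also have "\<dots> = 2 * (D * 2 ^ (i - 1)) * 2 ^ k"
    using i2 by simp
  also have "\<dots> \<le> 2 * P * 2 ^ k"
    using P by (simp add: mult_right_mono)
  finally show "D * T \<le> 2 * P * 2 ^ k" .
  have "2 ^ i \<le> 2 * P / D"
    using P D i2 by (simp add: field_simps)
  then show "2 ^ i \<le> 1 + 2 * P / D" by simp
qed

theorem lemma5:
  fixes \<Omega> :: "'a::euclidean_space set"
    and f :: "nat \<Rightarrow> 'a \<Rightarrow> real" and g :: "nat \<Rightarrow> 'a \<Rightarrow> 'a"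
    and init :: "nat \<Rightarrow> 'a" and u :: "nat \<Rightarrow> 'a"
    and T :: nat and D G :: real and i :: nat
  assumes convex_dom: "convex \<Omega>" and closed_dom: "closed \<Omega>"
    and cvx: "\<And>t. t \<in> {1..T} \<Longrightarrow> convex_on \<Omega> (f t)"
    and grad: "\<And>t w. t \<in> {1..T} \<Longrightarrow> w \<in> \<Omega> \<Longrightarrow>
                  (f t has_derivative (\<lambda>h. g t w \<bullet> h)) (at w within \<Omega>)"
    and A1: "\<And>t w. t \<in> {1..T} \<Longrightarrow> w \<in> \<Omega> \<Longrightarrow> norm (g t w) \<le> G"
    and A2a: "0 \<in> \<Omega>"
    and A2b: "\<And>w w'. w \<in> \<Omega> \<Longrightarrow> w' \<in> \<Omega> \<Longrightarrow> norm (w - w') \<le> D"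
    and A3: "\<And>t w. t \<in> {1..T} \<Longrightarrow> w \<in> \<Omega> \<Longrightarrow> 0 \<le> f t w \<and> f t w \<le> 1"
    and init_in: "\<And>k. init k \<in> \<Omega>"
    and u_in: "\<And>t. t \<in> {1..T+1} \<Longrightarrow> u t \<in> \<Omega>"
    and i_range: "i \<in> {1..nat \<lceil>log 2 (real T)\<rceil>}"
    and P_range: "D * 2 ^ (i - 1) < (\<Sum>t = 1..T. norm (u (t + 1) - u t))"
                 "(\<Sum>t = 1..T. norm (u (t + 1) - u t)) \<le> D * 2 ^ i"
  shows "(\<Sum>t = 1..T. f t (aod \<Omega> D G T f g init t)) - (\<Sum>t = 1..T. f t (u t))
     \<le> (D * G / 2 + 3 * G / 2 * sqrt (2 * D * (\<Sum>t = 1..T. norm (u (t + 1) - u t)))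
        + sqrt (3 * cT T * (1 + 2 * (\<Sum>t = 1..T. norm (u (t + 1) - u t)) / D))) * sqrt (real T)"
proof -
  interpret aod_setting \<Omega> D G T f g init
    using convex_dom closed_dom cvx grad A1 A2a A2b A3 init_in by unfold_locales
  define P where "P = (\<Sum>t = 1..T. norm (u (t + 1) - u t))"
  define k where "k = nat \<lceil>log 2 (real T)\<rceil> - i"
  have T: "1 \<le> T" and D: "0 < D" and k: "2 ^ k \<le> T" "T \<le> 2 ^ i * 2 ^ k"
    and PL: "P * 2 ^ k \<le> 2 * D * T" "D * T \<le> 2 * P * 2 ^ k" and i: "2 ^ i \<le> 1 + 2 * P / D"
    using dyadic_level[OF i_range P_range[folded P_def], folded k_def] by simp_all
  have G: "0 \<le> G"
    using A1[of 1 0] A2a T by (auto intro: order_trans[OF norm_ge_zero])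
  have "(\<Sum>t = 1..T. f t (played t) - f t (expert k t)) \<le> sqrt (3 * cT T * 2 ^ i * T)"
    using meta_regret[OF T k] by simp
  also have "\<dots> \<le> sqrt (3 * cT T * (1 + 2 * P / D)) * sqrt T"
    using i cT_nonneg[OF T] by (simp add: real_sqrt_mult[symmetric] mult_left_mono mult_right_mono)
  finally have meta: "(\<Sum>t = 1..T. f t (played t) - f t (expert k t))
      \<le> sqrt (3 * cT T * (1 + 2 * P / D)) * sqrt T" .
  have "(\<Sum>t = 1..T. f t (expert k t) - f t (u t))
      \<le> D * G * sqrt (2 ^ k) / 2 + G * P * sqrt (2 ^ k) + D * G * T / (2 * sqrt (2 ^ k))"
    using expert_dynamic_regret[OF D G u_in] by (simp add: P_def)
  also have "\<dots> \<le> (D * G / 2 + 3 * G / 2 * sqrt (2 * D * P)) * sqrt T"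
    using k by (intro ogd_tuned_bound[OF D G _ _ PL]) simp_all
  finally show ?thesis
    using meta unfolding P_def[symmetric] by (simp add: played_def sum_subtractf algebra_simps)
qed

end
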